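(* Let $p$ be an indecomposable permutation of $[n]$ avoiding $3241$ and $4321$ that contains $321$, with associated triple $(a,b,c)$. Then: (i) if $c$ is finite, all entries to the right of $a$ in $p$ are $\ge c$; (ii) if $c=\infty$, or if $c$ is finite and $c>b+1$, then $b+1$ lies to the left of $b$ in $p$; (iii) if $c=\infty$, then $a$ is the last entry of $p$; (iv) if $z>b$ is an entry of $p$, and in case $c$ is finite $z$ lies to the left of $c$ in $p$, then $z$ is a left-to-right maximum of $p$.
   Context: Permutations are in one-line notation; pattern containment/avoidance is classical. Indecomposable: no $k$, $1\le k\le n-1$, with $\{p_1,\dots,p_k\}=\{1,\dots,k\}$. An entry is a left-to-right maximum (LRMax) if it exceeds all entries to its left. The associated triple $(a,b,c)$ of a $321$-containing permutation: $a$ is the rightmost entry that plays the role of "1" in some occurrence of $321$; $b$ is the rightmost entry to the left of $a$ that exceeds $a$; $c$ is the first entry to the right of $a$ that is not a LRMax, with $c=\infty$ if no such entry exists. *)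

theory Defs
  imports Main
begin

text \<open>Permutations of [n] are lists in one-line notation; positions are 0-based.\<close>

definition is_perm :: "nat list \<Rightarrow> nat \<Rightarrow> bool" where
  "is_perm p n \<longleftrightarrow> distinct p \<and> set p = {1..n}"

definition contains :: "nat list \<Rightarrow> nat list \<Rightarrow> bool" where
  "contains p q \<longleftrightarrow> (\<exists>is :: nat list. length is = length q \<and> sorted_wrt (<) is \<and>
      (\<forall>j < length is. is ! j < length p) \<and>
      (\<forall>j < length q. \<forall>k < length q. (p ! (is ! j) < p ! (is ! k)) \<longleftrightarrow> (q ! j < q ! k)))"

definition avoids :: "nat list \<Rightarrow> nat list \<Rightarrow> bool" where
  "avoids p q \<longleftrightarrow> \<not> contains p q"

definition indecomposable :: "nat list \<Rightarrow> bool" where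
  "indecomposable p \<longleftrightarrow> (\<forall>k. 1 \<le> k \<and> k \<le> length p - 1 \<longrightarrow> set (take k p) \<noteq> {1..k})"

definition lrmax :: "nat list \<Rightarrow> nat \<Rightarrow> bool" where
  "lrmax p i \<longleftrightarrow> (\<forall>j < i. p ! j < p ! i)"

definition plays_one_321 :: "nat list \<Rightarrow> nat \<Rightarrow> bool" where
  "plays_one_321 p i \<longleftrightarrow> i < length p \<and>
     (\<exists>i1 i2. i1 < i2 \<and> i2 < i \<and> p ! i1 > p ! i2 \<and> p ! i2 > p ! i)"

definition pos_a :: "nat list \<Rightarrow> nat" where
  "pos_a p = (GREATEST i. plays_one_321 p i)"

definition pos_b :: "nat list \<Rightarrow> nat" where
  "pos_b p = (GREATEST j. j < pos_a p \<and> p ! j > p ! pos_a p)"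

text \<open>Position of c: first position right of a that is not a LRMax; None encodes c = infinity.\<close>
definition pos_c :: "nat list \<Rightarrow> nat option" where
  "pos_c p = (if \<exists>j. pos_a p < j \<and> j < length p \<and> \<not> lrmax p j
              then Some (LEAST j. pos_a p < j \<and> j < length p \<and> \<not> lrmax p j)
              else None)"

end

theory Submission
  imports Defs
begin

text \<open>
  By the choice of \<open>a\<close>, no entry right of \<open>a\<close>
  ends a 321. Hence all entries right of \<open>c\<close> exceed \<open>c\<close>, while those strictly between \<open>a\<close>
  and \<open>c\<close> are left-to-right maxima; one of them below \<open>c\<close> would cut \<open>p\<close> into a prefix lying
  entirely below the remaining suffix, against indecomposability. This gives (i), and (iii)
  likewise. Avoiding 3241 puts an entry larger than \<open>b\<close> to the left of \<open>b\<close>, so \<open>b + 1\<close>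
  occurs in \<open>p\<close>; by the choice of \<open>b\<close> it is not between \<open>b\<close> and \<open>a\<close>, and by (i), or as a
  left-to-right maximum when \<open>c = \<infinity>\<close>, it is not right of \<open>a\<close>. For (iv), an entry \<open>z > b\<close>
  left of \<open>a\<close> lies left of \<open>b\<close>, and a larger entry before it would extend \<open>z b a\<close> to a 4321.
\<close>

lemma contains_4321I:
  assumes "i < j" "j < k" "k < l" "l < length p"
    and "p ! j < p ! i" "p ! k < p ! j" "p ! l < p ! k"
  shows "contains p [4,3,2,1]"
  unfolding contains_def
  by (rule exI[of _ "[i,j,k,l]"]) (use assms in \<open>auto simp: less_Suc_eq numeral_eq_Suc\<close>)

lemma contains_3241I:
  assumes "i < j" "j < k" "k < l" "l < length p"
    and "p ! j < p ! i" "p ! i < p ! k" "p ! l < p ! j"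
  shows "contains p [3,2,4,1]"
  unfolding contains_def
  by (rule exI[of _ "[i,j,k,l]"]) (use assms in \<open>auto simp: less_Suc_eq numeral_eq_Suc\<close>)

lemma contains_321E:
  assumes "contains p [3,2,1]"
  obtains i j k where "i < j" "j < k" "k < length p" "p ! j < p ! i" "p ! k < p ! j"
  using assms unfolding contains_def
proof (elim exE conjE)
  fix xs :: "nat list"
  assume "length xs = length [3,2,1::nat]" "sorted_wrt (<) xs" "\<forall>j<length xs. xs ! j < length p"
    "\<forall>j<length [3,2,1::nat]. \<forall>k<length [3,2,1::nat].
       (p ! (xs ! j) < p ! (xs ! k)) = ([3,2,1::nat] ! j < [3,2,1] ! k)"
  then show thesis
    by (intro that[of "xs ! 0" "xs ! 1" "xs ! 2"]) (auto simp: sorted_wrt_iff_nth_less numeral_eq_Suc)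
qed

lemma is_perm_length: "is_perm p n \<Longrightarrow> length p = n"
  unfolding is_perm_def by (metis card_atLeastAtMost diff_Suc_1 distinct_card)

lemma is_perm_succ_entry:
  assumes "is_perm p n" "i < length p" "p ! j < p ! i"
  obtains q where "q < length p" "p ! q = p ! j + 1"
proof -
  have "p ! i \<in> {1..n}" using assms(1,2) nth_mem unfolding is_perm_def by blast
  then have "p ! j + 1 \<in> set p" using assms(1,3) unfolding is_perm_def by auto
  then show thesis using that by (auto simp: in_set_conv_nth)
qed

lemma prefix_set_if_below_suffix:
  assumes perm: "is_perm p n" and k: "k \<le> length p"
    and below: "\<And>i l. i < k \<Longrightarrow> k \<le> l \<Longrightarrow> l < length p \<Longrightarrow> p ! i < p ! l"
  shows "set (take k p) = {1..k}"
proof -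
  have dist: "distinct p" and set_p: "set p = {1..n}" using perm unfolding is_perm_def by auto
  have card_prefix: "card (set (take k p)) = k"
    using k dist by (simp add: distinct_card)
  have "{1..k} \<subseteq> set (take k p)"
  proof
    fix y assume y: "y \<in> {1..k}"
    show "y \<in> set (take k p)"
    proof (rule ccontr)
      assume y_notin: "y \<notin> set (take k p)"
      have "y \<in> set p" using y k set_p is_perm_length[OF perm] by auto
      then obtain l where l: "l < length p" "p ! l = y" by (auto simp: in_set_conv_nth)
      have "k \<le> l"
      proof (rule ccontr)
        assume "\<not> k \<le> l"
        then have "y \<in> set (take k p)" using l by (auto simp: in_set_conv_nth)
        then show False using y_notin by contradiction
      qed
      have "set (take k p) \<subseteq> {1..<y}"
      proof
        fix x assume "x \<in> set (take k p)"
        then obtain i where i: "i < k" "p ! i = x" by (auto simp: in_set_conv_nth)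
        have "x < y" using below[OF i(1) \<open>k \<le> l\<close> l(1)] i(2) l(2) by simp
        moreover have "x \<in> set p" using \<open>x \<in> set (take k p)\<close> in_set_takeD by fast
        ultimately show "x \<in> {1..<y}" using set_p by auto
      qed
      then have "card (set (take k p)) \<le> card {1..<y}" by (rule card_mono[rotated]) simp
      then show False using card_prefix y by auto
    qed
  qed
  then show ?thesis using card_subset_eq[OF finite_set] card_prefix by (metis card_atLeastAtMost diff_Suc_1)
qed

lemma not_indecomposable_if_below_suffix:
  assumes "is_perm p n" "0 < k" "k < length p"
    and "\<And>i l. i < k \<Longrightarrow> k \<le> l \<Longrightarrow> l < length p \<Longrightarrow> p ! i < p ! l"
  shows "\<not> indecomposable p"
proof -
  have "set (take k p) = {1..k}" by (rule prefix_set_if_below_suffix) (use assms in auto)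
  then show ?thesis using assms(2,3) unfolding indecomposable_def not_all by (intro exI[of _ k]) auto
qed

lemma plays_one_321_le_pos_a: "plays_one_321 p i \<Longrightarrow> i \<le> pos_a p"
  unfolding pos_a_def by (rule Greatest_le_nat[of _ i "length p"]) (auto simp: plays_one_321_def)

lemma plays_one_321_pos_a:
  assumes "contains p [3,2,1]"
  shows "plays_one_321 p (pos_a p)"
proof -
  obtain i j k where "i < j" "j < k" "k < length p" "p ! j < p ! i" "p ! k < p ! j"
    using contains_321E[OF assms] .
  then have "plays_one_321 p k" unfolding plays_one_321_def by blast
  then show ?thesis
    unfolding pos_a_def by (rule GreatestI_nat[of _ k "length p"]) (auto simp: plays_one_321_def)
qed

lemma no_321_ending_right_of_pos_a:
  assumes "pos_a p < k" "k < length p" "i < j" "j < k" "p ! j < p ! i" "p ! k < p ! j"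
  shows False
proof -
  have "plays_one_321 p k" using assms unfolding plays_one_321_def by blast
  then show False using plays_one_321_le_pos_a[of p k] assms(1) by simp
qed

lemma le_pos_b: "i < pos_a p \<Longrightarrow> p ! pos_a p < p ! i \<Longrightarrow> i \<le> pos_b p"
  unfolding pos_b_def by (rule Greatest_le_nat[of _ i "pos_a p"]) auto

lemma pos_b_before_and_above_pos_a:
  assumes "contains p [3,2,1]"
  shows "pos_b p < pos_a p \<and> p ! pos_a p < p ! pos_b p"
proof -
  obtain i j where "i < j" "j < pos_a p" "p ! j < p ! i" "p ! pos_a p < p ! j"
    using plays_one_321_pos_a[OF assms] unfolding plays_one_321_def by blast
  then show ?thesis
    unfolding pos_b_def
    using GreatestI_nat[of "\<lambda>l. l < pos_a p \<and> p ! pos_a p < p ! l" j "pos_a p"] by simp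
qed

lemma pos_c_SomeD:
  assumes "pos_c p = Some c"
  shows "pos_a p < c" "c < length p" "\<not> lrmax p c"
  using assms LeastI_ex[of "\<lambda>j. pos_a p < j \<and> j < length p \<and> \<not> lrmax p j"]
  unfolding pos_c_def by (auto split: if_splits)

lemma lrmax_before_pos_c:
  assumes "pos_a p < j" "j < length p" "\<And>c. pos_c p = Some c \<Longrightarrow> j < c"
  shows "lrmax p j"
proof (cases "pos_c p")
  case None
  then show ?thesis using assms(1,2) unfolding pos_c_def by (auto split: if_splits)
next
  case (Some c)
  then have "j < c" by (rule assms(3))
  moreover have "c = (LEAST j. pos_a p < j \<and> j < length p \<and> \<not> lrmax p j)"
    using Some unfolding pos_c_def by (auto split: if_splits)
  ultimately show ?thesis
    using not_less_Least[of j "\<lambda>j. pos_a p < j \<and> j < length p \<and> \<not> lrmax p j"] assms(1,2) by simp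
qed

lemma not_lrmaxE:
  assumes "distinct p" "j < length p" "\<not> lrmax p j"
  obtains i where "i < j" "p ! j < p ! i"
proof -
  obtain i where i: "i < j" "p ! i \<ge> p ! j" using assms(3) unfolding lrmax_def by (auto simp: not_less)
  then have "p ! i \<noteq> p ! j" using nth_eq_iff_index_eq[OF assms(1)] assms(2) by simp
  then show thesis using that i by simp
qed

lemma nth_pos_c_lt_right:
  assumes dist: "distinct p" and c: "pos_c p = Some c" and l: "c < l" "l < length p"
  shows "p ! c < p ! l"
proof (rule ccontr)
  assume "\<not> p ! c < p ! l"
  moreover have "p ! c \<noteq> p ! l" using nth_eq_iff_index_eq[OF dist] l by simp
  ultimately have "p ! l < p ! c" by simp
  moreover obtain i where "i < c" "p ! c < p ! i"
    using not_lrmaxE[OF dist] pos_c_SomeD[OF c] by metis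
  ultimately show False using no_321_ending_right_of_pos_a pos_c_SomeD(1)[OF c] l by fastforce
qed

lemma nth_pos_c_le_right_of_pos_a:
  assumes perm: "is_perm p n" and indec: "indecomposable p"
    and c: "pos_c p = Some c" and j: "pos_a p < j" "j < length p"
  shows "p ! c \<le> p ! j"
proof (rule ccontr)
  assume "\<not> p ! c \<le> p ! j"
  then have below_c: "p ! j < p ! c" by simp
  have dist: "distinct p" using perm by (simp add: is_perm_def)
  have c_bounds: "pos_a p < c" "c < length p" using pos_c_SomeD[OF c] by auto
  have "j < c"
  proof (rule ccontr)
    assume "\<not> j < c"
    with below_c have "c < j" by (auto simp: not_less le_less)
    then show False using nth_pos_c_lt_right[OF dist c _ j(2)] below_c by simp
  qed
  have lrmax_between_pos_a_pos_c: "lrmax p l" if "pos_a p < l" "l < c" for l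
    using lrmax_before_pos_c[of p l] that c c_bounds by auto
  have "\<not> indecomposable p"
  proof (rule not_indecomposable_if_below_suffix[OF perm])
    show "0 < Suc j" "Suc j < length p" using \<open>j < c\<close> c_bounds by auto
    fix i l assume i: "i < Suc j" and l: "Suc j \<le> l" "l < length p"
    have "p ! i \<le> p ! j"
      using lrmax_between_pos_a_pos_c[OF j(1) \<open>j < c\<close>] i unfolding lrmax_def
      by (cases "i = j") (auto intro: less_imp_le)
    also have "p ! j < p ! l"
    proof (cases l c rule: linorder_cases)
      case less
      then show ?thesis using lrmax_between_pos_a_pos_c[of l] j(1) l(1) unfolding lrmax_def by simp
    next
      case equal
      then show ?thesis using below_c by simp
    next
      case greater
      then show ?thesis using nth_pos_c_lt_right[OF dist c greater l(2)] below_c by simp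
    qed
    finally show "p ! i < p ! l" .
  qed
  then show False using indec by contradiction
qed

lemma pos_a_last_if_pos_c_None:
  assumes perm: "is_perm p n" and indec: "indecomposable p"
    and c321: "contains p [3,2,1]" and c: "pos_c p = None"
  shows "pos_a p = length p - 1"
proof (rule ccontr)
  assume "pos_a p \<noteq> length p - 1"
  moreover have "pos_a p < length p"
    using plays_one_321_pos_a[OF c321] by (simp add: plays_one_321_def)
  ultimately have "Suc (pos_a p) < length p" by simp
  have "\<not> indecomposable p"
  proof (rule not_indecomposable_if_below_suffix[OF perm])
    show "0 < Suc (pos_a p)" "Suc (pos_a p) < length p" by simp fact
    fix i l assume "i < Suc (pos_a p)" "Suc (pos_a p) \<le> l" "l < length p"
    moreover have "lrmax p l" using lrmax_before_pos_c[of p l] c calculation by simp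
    ultimately show "p ! i < p ! l" unfolding lrmax_def by simp
  qed
  then show False using indec by contradiction
qed

lemma larger_entry_before_pos_b:
  assumes dist: "distinct p" and av: "avoids p [3,2,4,1]" and c321: "contains p [3,2,1]"
  obtains i where "i < pos_b p" "p ! pos_b p < p ! i"
proof -
  obtain i1 i2 where i: "i1 < i2" "i2 < pos_a p" "p ! i2 < p ! i1" "p ! pos_a p < p ! i2"
    and a: "pos_a p < length p"
    using plays_one_321_pos_a[OF c321] unfolding plays_one_321_def by blast
  have b: "pos_b p < pos_a p" "p ! pos_a p < p ! pos_b p"
    using pos_b_before_and_above_pos_a[OF c321] by auto
  have "i2 \<le> pos_b p" using le_pos_b i(2,4) .
  show thesis
  proof (cases "p ! pos_b p < p ! i1")
    case True
    moreover have "i1 < pos_b p" using i(1) \<open>i2 \<le> pos_b p\<close> by simp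
    ultimately show thesis by (rule that[rotated])
  next
    case False
    moreover have "p ! i1 \<noteq> p ! pos_b p"
      using nth_eq_iff_index_eq[OF dist] i(1) \<open>i2 \<le> pos_b p\<close> b(1) a by simp
    ultimately have "p ! i1 < p ! pos_b p" by simp
    with i(3) have "i2 < pos_b p" using \<open>i2 \<le> pos_b p\<close> le_neq_implies_less by fastforce
    then have "contains p [3,2,4,1]"
      using contains_3241I[of i1 i2 "pos_b p" "pos_a p" p] i b a \<open>p ! i1 < p ! pos_b p\<close> by simp
    then show thesis using av unfolding avoids_def by contradiction
  qed
qed

lemma succ_pos_b_before_pos_b:
  assumes perm: "is_perm p n" and indec: "indecomposable p"
    and av: "avoids p [3,2,4,1]" and c321: "contains p [3,2,1]"
    and c: "pos_c p = None \<or> (\<exists>c. pos_c p = Some c \<and> p ! pos_b p + 1 < p ! c)"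
  shows "\<exists>j < pos_b p. p ! j = p ! pos_b p + 1"
proof -
  have dist: "distinct p" using perm by (simp add: is_perm_def)
  have b: "pos_b p < pos_a p" "p ! pos_a p < p ! pos_b p"
    using pos_b_before_and_above_pos_a[OF c321] by auto
  have a: "pos_a p < length p"
    using plays_one_321_pos_a[OF c321] by (simp add: plays_one_321_def)
  obtain i where i: "i < pos_b p" "p ! pos_b p < p ! i"
    using larger_entry_before_pos_b[OF dist av c321] .
  have "i < length p" using i(1) b(1) a by simp
  then obtain q where q: "q < length p" "p ! q = p ! pos_b p + 1"
    using is_perm_succ_entry[OF perm _ i(2)] by blast
  have "q < pos_b p"
  proof (rule ccontr)
    assume not_before: "\<not> q < pos_b p"
    have "q \<noteq> pos_b p" "q \<noteq> pos_a p" using q(2) b(2) by auto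
    moreover have "\<not> q < pos_a p"
    proof
      assume "q < pos_a p"
      then have "q \<le> pos_b p" using le_pos_b[of q p] b(2) q(2) by simp
      then show False using not_before \<open>q \<noteq> pos_b p\<close> by simp
    qed
    ultimately have "pos_a p < q" by simp
    show False
      using c
    proof
      assume "pos_c p = None"
      then have "lrmax p q" using lrmax_before_pos_c[of p q] \<open>pos_a p < q\<close> q(1) by simp
      moreover have "i < q" using i(1) b(1) \<open>pos_a p < q\<close> by simp
      ultimately have "p ! i < p ! q" unfolding lrmax_def by simp
      then show False using i(2) q(2) by simp
    next
      assume "\<exists>c. pos_c p = Some c \<and> p ! pos_b p + 1 < p ! c"
      then obtain c where "pos_c p = Some c" "p ! pos_b p + 1 < p ! c" by blast
      moreover have "p ! c \<le> p ! q"
        using nth_pos_c_le_right_of_pos_a[OF perm indec _ \<open>pos_a p < q\<close> q(1)] calculation(1) .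
      ultimately show False using q(2) by simp
    qed
  qed
  then show ?thesis using q(2) by blast
qed

lemma lrmax_if_above_pos_b:
  assumes dist: "distinct p" and av: "avoids p [4,3,2,1]" and c321: "contains p [3,2,1]"
    and i: "i < length p" "p ! pos_b p < p ! i" "\<And>c. pos_c p = Some c \<Longrightarrow> i < c"
  shows "lrmax p i"
proof (cases "pos_a p < i")
  case True
  then show ?thesis using lrmax_before_pos_c i by blast
next
  case False
  have b: "pos_b p < pos_a p" "p ! pos_a p < p ! pos_b p"
    using pos_b_before_and_above_pos_a[OF c321] by auto
  have a: "pos_a p < length p"
    using plays_one_321_pos_a[OF c321] by (simp add: plays_one_321_def)
  have "i \<noteq> pos_a p" using i(2) b(2) by auto
  with False have "i \<le> pos_b p" using le_pos_b[of i p] i(2) b(2) by simp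
  moreover have "i \<noteq> pos_b p" using i(2) by auto
  ultimately have "i < pos_b p" by simp
  show ?thesis unfolding lrmax_def
  proof (intro allI impI)
    fix j assume "j < i"
    show "p ! j < p ! i"
    proof (rule ccontr)
      assume "\<not> p ! j < p ! i"
      moreover have "p ! j \<noteq> p ! i" using nth_eq_iff_index_eq[OF dist] \<open>j < i\<close> i(1) by simp
      ultimately have "p ! i < p ! j" by simp
      then have "contains p [4,3,2,1]"
        using contains_4321I[of j i "pos_b p" "pos_a p" p] \<open>j < i\<close> \<open>i < pos_b p\<close> b a i(2) by simp
      then show False using av unfolding avoids_def by contradiction
    qed
  qed
qed

theorem lemma7:
  fixes p :: "nat list" and n :: nat
  assumes perm: "is_perm p n"
    and indec: "indecomposable p"
    and av1: "avoids p [3,2,4,1]"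
    and av2: "avoids p [4,3,2,1]"
    and c321: "contains p [3,2,1]"
  shows "(\<forall>jc. pos_c p = Some jc \<longrightarrow> (\<forall>j. pos_a p < j \<and> j < length p \<longrightarrow> p ! j \<ge> p ! jc))
       \<and> ((pos_c p = None \<or> (\<exists>jc. pos_c p = Some jc \<and> p ! jc > p ! pos_b p + 1))
            \<longrightarrow> (\<exists>j < pos_b p. p ! j = p ! pos_b p + 1))
       \<and> (pos_c p = None \<longrightarrow> pos_a p = length p - 1)
       \<and> (\<forall>i < length p. p ! i > p ! pos_b p \<and>
             (\<forall>jc. pos_c p = Some jc \<longrightarrow> i < jc) \<longrightarrow> lrmax p i)"
proof (intro conjI allI impI)
  have dist: "distinct p" using perm by (simp add: is_perm_def)
  show "p ! c \<le> p ! j" if "pos_c p = Some c" "pos_a p < j \<and> j < length p" for c j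
    using nth_pos_c_le_right_of_pos_a[OF perm indec] that by blast
  show "\<exists>j < pos_b p. p ! j = p ! pos_b p + 1"
    if "pos_c p = None \<or> (\<exists>c. pos_c p = Some c \<and> p ! c > p ! pos_b p + 1)"
    using succ_pos_b_before_pos_b[OF perm indec av1 c321] that by blast
  show "pos_a p = length p - 1" if "pos_c p = None"
    using pos_a_last_if_pos_c_None[OF perm indec c321 that] .
  show "lrmax p i"
    if "i < length p" "p ! i > p ! pos_b p \<and> (\<forall>c. pos_c p = Some c \<longrightarrow> i < c)" for i
    using lrmax_if_above_pos_b[OF dist av2 c321] that by blast
qed

end
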